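(* Let $(V_1,\dots,V_n)$ be an $n$-tuple of doubly non-commuting isometries on $H$ such that $V_1,\dots,V_n$ are all pure isometries and $\bigcap_{i=1}^n\ker V_i^*$ is finite-dimensional. Let $T\in B(H)$ be such that, for each $i=1,\dots,n$, $TV_i=\tau_iV_iT$ for some $\tau_i\in\mathbb T$ and $T(\ker V_i^* )\subseteq\ker V_i^*$. If the restriction of $T$ to $\bigcap_{i=1}^n\ker V_i^*$ has trivial kernel, then $T(H)=H$.
   Context: Fix $n\ge1$ and $z_{ij}\in\mathbb T$ ($i\ne j$) with $z_{ji}=\overline{z_{ij}}$; $(V_1,\dots,V_n)$ is doubly non-commuting if the $V_i$ are isometries with $V_i^*V_j=\overline{z_{ij}}V_jV_i^*$ for $i\ne j$. An isometry $S$ on $H$ is a pure isometry if $\{0\}$ is the only $S$-invariant subspace of $H$ on which $S$ is unitary. *)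

theory Defs
  imports "HOL-Analysis.Analysis"
begin

text \<open>A complex Hilbert space is then a type of class
cinner_space that is also complete_space.\<close>

class cinner_space = real_normed_vector +
  fixes scaleC :: "complex \<Rightarrow> 'a \<Rightarrow> 'a"
    and cinner :: "'a \<Rightarrow> 'a \<Rightarrow> complex"
  assumes scaleC_of_real: "scaleC (of_real r) x = scaleR r x"
    and scaleC_add_right: "scaleC a (x + y) = scaleC a x + scaleC a y"
    and scaleC_add_left: "scaleC (a + b) x = scaleC a x + scaleC b x"
    and scaleC_scaleC: "scaleC a (scaleC b x) = scaleC (a * b) x"
    and cinner_commute: "cinner x y = cnj (cinner y x)"
    and cinner_add_left: "cinner (x + y) z = cinner x z + cinner y z"
    and cinner_scaleC_left: "cinner (scaleC a x) y = a * cinner x y"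
    and cinner_self_norm: "cinner x x = of_real ((norm x)\<^sup>2)"

definition bounded_clinear :: "('a::cinner_space \<Rightarrow> 'a) \<Rightarrow> bool" where
  "bounded_clinear T \<longleftrightarrow> bounded_linear T \<and> (\<forall>c x. T (scaleC c x) = scaleC c (T x))"

text \<open>The Hilbert space adjoint (it exists and is unique for bounded operators
on a Hilbert space by the Riesz representation theorem).\<close>
definition cadjoint :: "('a::cinner_space \<Rightarrow> 'a) \<Rightarrow> ('a \<Rightarrow> 'a)" where
  "cadjoint T = (SOME S. \<forall>x y. cinner (T x) y = cinner x (S y))"

definition isometry_op :: "('a::cinner_space \<Rightarrow> 'a) \<Rightarrow> bool" where
  "isometry_op V \<longleftrightarrow> bounded_clinear V \<and> (\<forall>x. norm (V x) = norm x)"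

text \<open>Complex linear subspaces (closedness is required separately).\<close>
definition csubspace :: "('a::cinner_space) set \<Rightarrow> bool" where
  "csubspace M \<longleftrightarrow> 0 \<in> M \<and> (\<forall>x\<in>M. \<forall>y\<in>M. x + y \<in> M) \<and> (\<forall>c. \<forall>x\<in>M. scaleC c x \<in> M)"

text \<open>Pure isometry: the zero subspace is the only (closed) invariant subspace on
which S is unitary, i.e. S restricted to M maps M onto M.\<close>
definition pure_isometry :: "('a::cinner_space \<Rightarrow> 'a) \<Rightarrow> bool" where
  "pure_isometry S \<longleftrightarrow> isometry_op S \<and>
     (\<forall>M. csubspace M \<and> closed M \<and> S ` M = M \<longrightarrow> M = {0})"

definition cspan :: "('a::cinner_space) set \<Rightarrow> 'a set" where
  "cspan F = {y. \<exists>c. y = (\<Sum>x\<in>F. scaleC (c x) x)}"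

definition cfinite_dim :: "('a::cinner_space) set \<Rightarrow> bool" where
  "cfinite_dim W \<longleftrightarrow> (\<exists>F. finite F \<and> F \<subseteq> W \<and> W \<subseteq> cspan F)"

definition doubly_noncommuting ::
    "nat \<Rightarrow> (nat \<Rightarrow> nat \<Rightarrow> complex) \<Rightarrow> (nat \<Rightarrow> 'a::cinner_space \<Rightarrow> 'a) \<Rightarrow> bool" where
  "doubly_noncommuting n z V \<longleftrightarrow>
     (\<forall>i\<in>{1..n}. isometry_op (V i)) \<and>
     (\<forall>i\<in>{1..n}. \<forall>j\<in>{1..n}. i \<noteq> j \<longrightarrow>
        (\<forall>x. cadjoint (V i) (V j x) = scaleC (cnj (z i j)) (V j (cadjoint (V i) x))))"

end

theory Submission
  imports Defs
begin

text \<open>The joint kernel W of the adjoints V_i^* is invariant under T, and T is injective on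
  it; as W is finite-dimensional, T maps W onto W and is bounded below there. The relations
  T V_i = tau_i V_i T and V_i^* T = tau_i T V_i^* make T respect the orthogonal splitting
  x = (x - V_i V_i^* x) + V_i V_i^* x up to unimodular factors, so induction on the orders
  with which powers of the V_i^* annihilate x carries the lower bound to the space generated by
  W under the V_i. By purity (a Wold-type argument) that space is dense, hence T is bounded
  below everywhere, its range is closed, and the range contains a dense set.\<close>

section \<open>Complex inner product spaces\<close>

global_interpretation cvs: vector_space "scaleC :: complex \<Rightarrow> 'a \<Rightarrow> 'a::cinner_space"
  by unfold_locales (auto simp: scaleC_add_right scaleC_add_left scaleC_scaleC
      scaleC_of_real[of 1, simplified])

lemma csubspace_iff_cvs_subspace: "csubspace M = cvs.subspace M"
  by (simp add: csubspace_def cvs.subspace_def)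

lemmas [simp] = cvs.scale_zero_left cvs.scale_zero_right scaleC_scaleC

lemma cinner_zero_left [simp]: "cinner 0 y = 0"
  using cinner_add_left[of 0 0 y] by simp

lemma cinner_minus_left: "cinner (- x) y = - cinner x y"
  using cinner_add_left[of x "-x" y] by (simp add: add_eq_0_iff)

lemma cinner_diff_left: "cinner (x - y) z = cinner x z - cinner y z"
  using cinner_add_left[of x "-y" z] by (simp add: cinner_minus_left)

lemma cinner_add_right: "cinner x (y + z) = cinner x y + cinner x z"
  by (metis cinner_add_left cinner_commute complex_cnj_add)

lemma cinner_zero_right [simp]: "cinner x 0 = 0"
  by (metis cinner_commute cinner_zero_left complex_cnj_zero)

lemma cinner_minus_right: "cinner x (- y) = - cinner x y"
  by (metis cinner_commute cinner_minus_left complex_cnj_minus)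

lemma cinner_diff_right: "cinner x (y - z) = cinner x y - cinner x z"
  by (metis cinner_commute cinner_diff_left complex_cnj_diff)

lemma cinner_scaleC_right: "cinner x (scaleC a y) = cnj a * cinner x y"
  by (metis cinner_commute cinner_scaleC_left complex_cnj_mult)

lemma cinner_sum_left: "cinner (\<Sum>i\<in>A. f i) y = (\<Sum>i\<in>A. cinner (f i) y)"
  by (induct A rule: infinite_finite_induct) (auto simp: cinner_add_left)

lemma cinner_self_eq_0 [simp]: "cinner x x = 0 \<longleftrightarrow> x = 0"
  by (simp add: cinner_self_norm)

lemma cinner_ext_left: "(\<And>u. cinner p u = cinner q u) \<Longrightarrow> p = q"
  by (metis cinner_diff_left cinner_self_eq_0 eq_iff_diff_eq_0)

lemma cinner_ext_right: "(\<And>u. cinner u p = cinner u q) \<Longrightarrow> p = q"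
  by (metis cinner_commute cinner_ext_left)

lemma norm_scaleC [simp]: "norm (scaleC a x) = cmod a * norm x"
proof -
  have "cinner (scaleC a x) (scaleC a x) = (a * cnj a) * cinner x x"
    by (simp add: cinner_scaleC_left cinner_scaleC_right mult.assoc)
  also have "a * cnj a = complex_of_real ((cmod a)\<^sup>2)"
    by (rule complex_norm_square[symmetric])
  finally have "complex_of_real ((norm (scaleC a x))\<^sup>2)
      = complex_of_real ((cmod a)\<^sup>2 * (norm x)\<^sup>2)"
    unfolding cinner_self_norm of_real_mult .
  then have "(norm (scaleC a x))\<^sup>2 = (cmod a * norm x)\<^sup>2"
    unfolding of_real_eq_iff power_mult_distrib .
  then show ?thesis by (simp add: power2_eq_iff_nonneg)
qed

lemma bounded_linear_scaleC: "bounded_linear (scaleC c :: 'a::cinner_space \<Rightarrow> 'a)"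
proof (rule bounded_linear_intro[where K="cmod c"])
  show "scaleC c (x + y) = scaleC c x + scaleC c y" for x y :: 'a
    by (rule scaleC_add_right)
  show "scaleC c (scaleR r x) = scaleR r (scaleC c x)" for r and x :: 'a
    by (simp flip: scaleC_of_real add: mult.commute)
  show "norm (scaleC c x) \<le> norm x * cmod c" for x :: 'a
    by (simp add: mult.commute)
qed

lemma norm_add_sq: "(norm (x + y))\<^sup>2 = (norm x)\<^sup>2 + (norm y)\<^sup>2 + 2 * Re (cinner x y)"
proof -
  have "cinner (x + y) (x + y) = cinner x x + cinner y y + (cinner x y + cnj (cinner x y))"
    by (simp add: cinner_add_left cinner_add_right cinner_commute[of y x])
  also have "cinner x y + cnj (cinner x y) = complex_of_real (2 * Re (cinner x y))"
    by (simp add: complex_add_cnj)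
  finally have "complex_of_real ((norm (x + y))\<^sup>2)
      = complex_of_real ((norm x)\<^sup>2 + (norm y)\<^sup>2 + 2 * Re (cinner x y))"
    unfolding cinner_self_norm of_real_add .
  then show ?thesis
    unfolding of_real_eq_iff .
qed

lemma norm_diff_sq: "(norm (x - y))\<^sup>2 = (norm x)\<^sup>2 + (norm y)\<^sup>2 - 2 * Re (cinner x y)"
  using norm_add_sq[of x "-y"] by (simp add: cinner_minus_right)

lemma parallelogram_law:
  fixes x y :: "'a::cinner_space"
  shows "(norm (x - y))\<^sup>2 = 2 * (norm x)\<^sup>2 + 2 * (norm y)\<^sup>2 - (norm (x + y))\<^sup>2"
  using norm_add_sq[of x y] norm_diff_sq[of x y] by simp

lemma Re_cinner: "Re (cinner x y) = ((norm (x + y))\<^sup>2 - (norm x)\<^sup>2 - (norm y)\<^sup>2) / 2"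
  using norm_add_sq[of x y] by simp

lemma Im_cinner: "Im (cinner x y) = Re (cinner x (scaleC \<i> y))"
  by (simp add: cinner_scaleC_right)

lemma cinner_polarization: "cinner x y = Complex
   (((norm (x + y))\<^sup>2 - (norm x)\<^sup>2 - (norm y)\<^sup>2) / 2)
   (((norm (x + scaleC \<i> y))\<^sup>2 - (norm x)\<^sup>2 - (norm (scaleC \<i> y))\<^sup>2) / 2)"
  by (simp add: complex_eq_iff Im_cinner Re_cinner)

lemma continuous_on_cinner_left: "continuous_on UNIV (\<lambda>x. cinner x y)"
  unfolding cinner_polarization by (intro continuous_intros) auto

lemma closed_orthogonal_complement: "closed {x. \<forall>u\<in>S. cinner x u = 0}"
proof -
  have eq: "{x. \<forall>u\<in>S. cinner x u = 0} = (\<Inter>u\<in>S. {x. cinner x u = 0})"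
    by auto
  have "closed {x. cinner x u = 0}" for u
    by (rule closed_Collect_eq[OF continuous_on_cinner_left continuous_on_const])
  then show ?thesis
    unfolding eq by (intro closed_INT) auto
qed

lemma csubspace_closure:
  assumes S: "csubspace S"
  shows "csubspace (closure S)"
proof -
  have cont: "continuous_on UNIV (\<lambda>x. a + x)" "continuous_on UNIV (\<lambda>x. x + a)"
    "continuous_on UNIV (scaleC c)" for a :: 'a and c
    by (auto intro!: continuous_intros linear_continuous_on[OF bounded_linear_scaleC])
  have add_left: "(\<lambda>x. a + x) ` closure S \<subseteq> closure S" if "a \<in> S" for a
    using S that closure_subset
    by (intro image_closure_subset continuous_on_subset[OF cont(1)]) (auto simp: csubspace_def)
  have add: "(\<lambda>x. x + b) ` closure S \<subseteq> closure S" if "b \<in> closure S" for b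
    using add_left that closure_subset
    by (intro image_closure_subset continuous_on_subset[OF cont(2)]) auto
  have scale: "scaleC c ` closure S \<subseteq> closure S" for c
    using S closure_subset
    by (intro image_closure_subset continuous_on_subset[OF cont(3)]) (auto simp: csubspace_def, blast)
  show ?thesis
    using S add scale closure_subset unfolding csubspace_def by blast
qed

section \<open>Orthogonal projection onto closed subspaces\<close>

lemma parallelogram_diff_bound:
  fixes a b :: "'a::cinner_space"
  assumes "0 \<le> d" and "2 * d \<le> norm (a + b)"
    and "norm a \<le> d + s" and "0 \<le> s" and "s \<le> 1"
    and "norm b \<le> d + t" and "0 \<le> t" and "t \<le> 1"
  shows "(norm (a - b))\<^sup>2 \<le> (4 * d + 2) * (s + t)"
proof -
  have "(2 * d)\<^sup>2 \<le> (norm (a + b))\<^sup>2"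
    using assms(1,2) by (intro power_mono) auto
  moreover have "(norm a)\<^sup>2 \<le> (d + s)\<^sup>2" "(norm b)\<^sup>2 \<le> (d + t)\<^sup>2"
    using assms by (auto intro: power_mono)
  ultimately have "(norm (a - b))\<^sup>2 \<le> 4 * d * (s + t) + 2 * (s * s + t * t)"
    unfolding parallelogram_law by (simp add: power2_eq_square algebra_simps)
  also have "\<dots> \<le> 4 * d * (s + t) + 2 * (s + t)"
    using assms mult_left_le[of s s] mult_left_le[of t t] by simp
  finally show ?thesis by (simp add: algebra_simps)
qed

lemma Cauchy_if_dist_sq_bound:
  fixes f :: "nat \<Rightarrow> 'a::metric_space"
  assumes "0 < C"
    and bound: "\<And>k l. (dist (f k) (f l))\<^sup>2 \<le> C * (inverse (real (Suc k)) + inverse (real (Suc l)))"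
  shows "Cauchy f"
proof (rule metric_CauchyI)
  fix e :: real
  assume "e > 0"
  then have "e\<^sup>2 / (2 * C) > 0"
    using \<open>0 < C\<close> by simp
  then obtain N where N: "inverse (real (Suc N)) < e\<^sup>2 / (2 * C)"
    using reals_Archimedean by blast
  have "dist (f k) (f l) < e" if "N \<le> k" "N \<le> l" for k l
  proof -
    have "inverse (real (Suc k)) \<le> inverse (real (Suc N))"
      and "inverse (real (Suc l)) \<le> inverse (real (Suc N))"
      using that by (auto intro!: le_imp_inverse_le)
    then have "(dist (f k) (f l))\<^sup>2 \<le> C * (2 * inverse (real (Suc N)))"
      using bound[of k l] \<open>0 < C\<close> by (smt (verit) mult_left_mono)
    also have "\<dots> < e\<^sup>2"
      using N \<open>0 < C\<close> by (simp add: field_simps)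
    finally show ?thesis
      using \<open>e > 0\<close> by (simp add: power_less_imp_less_base)
  qed
  then show "\<exists>N. \<forall>k\<ge>N. \<forall>l\<ge>N. dist (f k) (f l) < e"
    by blast
qed

lemma nearest_point_exists:
  fixes M :: "'a::{cinner_space,complete_space} set"
  assumes M: "csubspace M" and closed: "closed M"
  shows "\<exists>m\<in>M. \<forall>y\<in>M. norm (x - m) \<le> norm (x - y)"
proof -
  have "0 \<in> M" and M_add: "\<And>a b. a \<in> M \<Longrightarrow> b \<in> M \<Longrightarrow> a + b \<in> M"
    and M_scaleR: "\<And>r a. a \<in> M \<Longrightarrow> scaleR r a \<in> M"
    using M scaleC_of_real unfolding csubspace_def by metis+
  define d where "d = infdist x M"
  have d_nonneg: "0 \<le> d"
    by (simp add: d_def infdist_nonneg)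
  have d_le: "d \<le> norm (x - y)" if "y \<in> M" for y
    using infdist_le[OF that, of x] by (simp add: d_def dist_norm)
  define \<delta> :: "nat \<Rightarrow> real" where "\<delta> k = inverse (real (Suc k))" for k
  have \<delta>: "0 < \<delta> k" "\<delta> k \<le> 1" for k
    by (auto simp: \<delta>_def field_simps)
  have "\<exists>y\<in>M. norm (x - y) < d + \<delta> k" for k
  proof -
    have "d = (INF y\<in>M. dist x y)"
      using \<open>0 \<in> M\<close> infdist_notempty[of M x] by (auto simp: d_def)
    then have "(INF y\<in>M. dist x y) < d + \<delta> k"
      using \<delta>(1)[of k] by simp
    then show ?thesis
      using cInf_lessD[of "dist x ` M"] \<open>0 \<in> M\<close> by (auto simp: dist_norm)
  qed
  then obtain f where f_in: "\<And>k. f k \<in> M" and f_close: "\<And>k. norm (x - f k) < d + \<delta> k"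
    by metis
  have f_diff: "(norm (f k - f l))\<^sup>2 \<le> (4 * d + 2) * (\<delta> k + \<delta> l)" for k l
  proof -
    have "x - f k + (x - f l) = scaleR 2 (x - scaleR (1/2) (f k + f l))"
      by (simp add: algebra_simps scaleR_2)
    moreover have "scaleR (1/2) (f k + f l) \<in> M"
      using f_in M_add M_scaleR by blast
    ultimately have "2 * d \<le> norm (x - f k + (x - f l))"
      using d_le by auto
    then have "(norm ((x - f k) - (x - f l)))\<^sup>2 \<le> (4 * d + 2) * (\<delta> k + \<delta> l)"
      using d_nonneg f_close[of k] f_close[of l] \<delta>[of k] \<delta>[of l]
      by (intro parallelogram_diff_bound) auto
    then show ?thesis
      by (simp add: norm_minus_commute)
  qed
  have "Cauchy f"
    using f_diff d_nonneg
    by (intro Cauchy_if_dist_sq_bound[where C="4 * d + 2"]) (auto simp: dist_norm \<delta>_def)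
  then obtain m where "f \<longlonglongrightarrow> m"
    using Cauchy_convergent_iff convergent_def by blast
  have "m \<in> M"
    using closed_sequentially[OF closed f_in \<open>f \<longlonglongrightarrow> m\<close>] .
  have "norm (x - m) \<le> d"
  proof (rule LIMSEQ_le)
    show "(\<lambda>k. norm (x - f k)) \<longlonglongrightarrow> norm (x - m)"
      by (intro tendsto_intros \<open>f \<longlonglongrightarrow> m\<close>)
    show "(\<lambda>k. d + \<delta> k) \<longlonglongrightarrow> d"
      using tendsto_add[OF tendsto_const LIMSEQ_inverse_real_of_nat, of d] by (simp add: \<delta>_def)
    show "\<exists>N. \<forall>k\<ge>N. norm (x - f k) \<le> d + \<delta> k"
      using f_close less_imp_le by blast
  qed
  then show ?thesis
    using \<open>m \<in> M\<close> d_le by force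
qed

lemma nearest_point_orthogonal:
  assumes M: "csubspace M" and "m \<in> M" and "u \<in> M"
    and nearest: "\<And>y. y \<in> M \<Longrightarrow> norm (x - m) \<le> norm (x - y)"
  shows "cinner (x - m) u = 0"
proof (rule ccontr)
  define e where "e = x - m"
  define c where "c = cinner e u"
  assume "cinner (x - m) u \<noteq> 0"
  then have "c \<noteq> 0"
    by (simp add: c_def e_def)
  define s where "s = 1 / ((norm u)\<^sup>2 + 1)"
  have "s > 0" and s_small: "s * (norm u)\<^sup>2 < 1"
    by (simp_all add: s_def add_nonneg_pos divide_less_eq add_pos_nonneg)
  define t where "t = complex_of_real s * c"
  have "m + scaleC t u \<in> M"
    using M \<open>m \<in> M\<close> \<open>u \<in> M\<close> by (simp add: csubspace_def)
  then have "norm e \<le> norm (e - scaleC t u)"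
    using nearest by (simp add: e_def algebra_simps)
  then have "(norm e)\<^sup>2 \<le> (norm (e - scaleC t u))\<^sup>2"
    by (simp add: power_mono)
  then have le: "2 * Re (cinner e (scaleC t u)) \<le> (cmod t * norm u)\<^sup>2"
    by (simp add: norm_diff_sq)
  have "Re (cinner e (scaleC t u)) = s * ((Re c)\<^sup>2 + (Im c)\<^sup>2)"
    by (simp add: cinner_scaleC_right t_def c_def[symmetric] power2_eq_square algebra_simps)
  then have "Re (cinner e (scaleC t u)) = s * (cmod c)\<^sup>2"
    by (simp add: cmod_power2)
  moreover have "(cmod t * norm u)\<^sup>2 = s * (cmod c)\<^sup>2 * (s * (norm u)\<^sup>2)"
    using \<open>s > 0\<close> by (simp add: t_def norm_mult power_mult_distrib power2_eq_square)
  ultimately have "s * (cmod c)\<^sup>2 * 2 \<le> s * (cmod c)\<^sup>2 * (s * (norm u)\<^sup>2)"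
    using le by (simp add: mult.commute)
  moreover have "s * (cmod c)\<^sup>2 > 0"
    using \<open>s > 0\<close> \<open>c \<noteq> 0\<close> by simp
  ultimately have "2 \<le> s * (norm u)\<^sup>2"
    by (rule mult_left_le_imp_le)
  then show False
    using s_small by simp
qed

lemma orthogonal_projection_exists:
  fixes M :: "'a::{cinner_space,complete_space} set"
  assumes "csubspace M" and "closed M"
  shows "\<exists>m\<in>M. \<forall>u\<in>M. cinner (x - m) u = 0"
  using nearest_point_exists[OF assms] nearest_point_orthogonal[OF assms(1)] by metis

section \<open>Bounded operators and isometries\<close>

lemma closed_range_if_bounded_below:
  fixes T :: "'a::{real_normed_vector,complete_space} \<Rightarrow> 'b::real_normed_vector"
  assumes "bounded_linear T" and "0 < m" and "\<And>x. m * norm x \<le> norm (T x)"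
  shows "closed (range T)"
  using complete_isometric_image[OF assms(2) subspace_UNIV assms(1) _ complete_UNIV] assms(3)
  by (simp add: complete_imp_closed)

lemma bounded_below_on_closure:
  assumes "continuous_on UNIV T" and "x \<in> closure S"
    and "\<And>y. y \<in> S \<Longrightarrow> m * norm y \<le> norm (T y)"
  shows "m * norm x \<le> norm (T x)"
proof -
  have "closed {y. m * norm y \<le> norm (T y)}"
    using assms(1) by (intro closed_Collect_le continuous_intros) auto
  then show ?thesis
    using closure_minimal[of S "{y. m * norm y \<le> norm (T y)}"] assms(2,3) by auto
qed

lemma bounded_clinear_add: "bounded_clinear T \<Longrightarrow> T (x + y) = T x + T y"
  by (simp add: bounded_clinear_def linear_add bounded_linear.linear)

lemma bounded_clinear_scaleC: "bounded_clinear T \<Longrightarrow> T (scaleC c x) = scaleC c (T x)"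
  by (simp add: bounded_clinear_def)

lemma bounded_clinear_zero: "bounded_clinear T \<Longrightarrow> T 0 = 0"
  by (simp add: bounded_clinear_def linear_0 bounded_linear.linear)

lemma bounded_clinear_diff: "bounded_clinear T \<Longrightarrow> T (x - y) = T x - T y"
  by (simp add: bounded_clinear_def linear_diff bounded_linear.linear)

lemma bounded_clinear_sum: "bounded_clinear T \<Longrightarrow> T (\<Sum>i\<in>A. f i) = (\<Sum>i\<in>A. T (f i))"
  by (induct A rule: infinite_finite_induct) (auto simp: bounded_clinear_add bounded_clinear_zero)

lemma csubspace_range:
  assumes T: "bounded_clinear T"
  shows "csubspace (range T)"
  unfolding csubspace_def
proof (intro conjI ballI allI)
  show "0 \<in> range T"
    using bounded_clinear_zero[OF T] by (metis rangeI)
  show "x + y \<in> range T" if xy: "x \<in> range T" "y \<in> range T" for x y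
  proof -
    obtain a b where "x = T a" "y = T b"
      using xy by blast
    then show ?thesis
      using bounded_clinear_add[OF T, of a b] by (metis rangeI)
  qed
  show "scaleC c x \<in> range T" if x: "x \<in> range T" for c x
  proof -
    obtain a where "x = T a"
      using x by blast
    then show ?thesis
      using bounded_clinear_scaleC[OF T, of c a] by (metis rangeI)
  qed
qed

lemma isometry_bounded_clinear: "isometry_op V \<Longrightarrow> bounded_clinear V"
  by (simp add: isometry_op_def)

lemma isometry_norm: "isometry_op V \<Longrightarrow> norm (V x) = norm x"
  by (simp add: isometry_op_def)

lemma isometry_cinner:
  assumes V: "isometry_op V"
  shows "cinner (V x) (V y) = cinner x y"
proof -
  have add: "V a + V b = V (a + b)" and scale: "scaleC c (V a) = V (scaleC c a)" for a b c
    using bounded_clinear_add bounded_clinear_scaleC isometry_bounded_clinear[OF V] by metis+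
  show ?thesis
    unfolding cinner_polarization[of "V x"]
    by (simp only: add scale isometry_norm[OF V] flip: cinner_polarization)
qed

lemma isometry_closed_range:
  fixes V :: "'a::{cinner_space,complete_space} \<Rightarrow> 'a"
  assumes "isometry_op V"
  shows "closed (range V)"
  using assms by (intro closed_range_if_bounded_below[where m=1])
    (auto simp: isometry_op_def bounded_clinear_def)

text \<open>The adjoint of an isometry V exists: it sends y to the V-preimage of the projection
  of y onto the closed range of V.\<close>

lemma cinner_cadjoint_isometry:
  fixes V :: "'a::{cinner_space,complete_space} \<Rightarrow> 'a"
  assumes V: "isometry_op V"
  shows "cinner (V x) y = cinner x (cadjoint V y)"
proof -
  have "\<exists>s. \<forall>u. cinner (y - V s) (V u) = 0" for y
    using orthogonal_projection_exists[OF csubspace_range isometry_closed_range, of V y]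
      isometry_bounded_clinear[OF V] V
    by blast
  then obtain S where S: "\<And>y u. cinner (y - V (S y)) (V u) = 0"
    by metis
  have "cinner (V x) y = cinner x (S y)" for x y
  proof -
    have "cinner (V x) (y - V (S y)) = 0"
      using S[of y x] by (metis cinner_commute complex_cnj_zero)
    then show ?thesis
      by (simp add: cinner_diff_right isometry_cinner[OF V])
  qed
  then have "\<exists>S. \<forall>x y. cinner (V x) y = cinner x (S y)"
    by blast
  from someI_ex[OF this] show ?thesis
    unfolding cadjoint_def by blast
qed

context
  fixes V :: "'a::{cinner_space,complete_space} \<Rightarrow> 'a"
  assumes V: "isometry_op V"
begin

lemma cinner_cadjoint_isometry_left: "cinner (cadjoint V y) x = cinner y (V x)"
  by (metis cinner_cadjoint_isometry[OF V] cinner_commute)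

lemma cadjoint_isometry_add: "cadjoint V (x + y) = cadjoint V x + cadjoint V y"
  by (rule cinner_ext_right)
    (simp add: cinner_cadjoint_isometry[OF V, symmetric] cinner_add_right)

lemma cadjoint_isometry_diff: "cadjoint V (x - y) = cadjoint V x - cadjoint V y"
  by (rule cinner_ext_right)
    (simp add: cinner_cadjoint_isometry[OF V, symmetric] cinner_diff_right)

lemma cadjoint_isometry_scaleC: "cadjoint V (scaleC c x) = scaleC c (cadjoint V x)"
  by (rule cinner_ext_right)
    (simp add: cinner_cadjoint_isometry[OF V, symmetric] cinner_scaleC_right)

lemma cadjoint_isometry_zero: "cadjoint V 0 = 0"
  by (rule cinner_ext_right) (simp add: cinner_cadjoint_isometry[OF V, symmetric])

lemma cadjoint_isometry_cancel: "cadjoint V (V x) = x"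
  by (rule cinner_ext_right)
    (simp add: cinner_cadjoint_isometry[OF V, symmetric] isometry_cinner[OF V])

lemma cadjoint_isometry_eq_0_iff: "cadjoint V x = 0 \<longleftrightarrow> (\<forall>u. cinner x (V u) = 0)"
  by (metis cinner_cadjoint_isometry_left cinner_self_eq_0 cinner_zero_left)

lemma closed_kernel_cadjoint_isometry: "closed {x. cadjoint V x = 0}"
proof -
  have eq: "{x. cadjoint V x = 0} = {x. \<forall>u\<in>range V. cinner x u = 0}"
    by (auto simp: cadjoint_isometry_eq_0_iff)
  show ?thesis
    unfolding eq by (rule closed_orthogonal_complement)
qed

lemma norm_sq_split_isometry:
  "(norm x)\<^sup>2 = (norm (x - V (cadjoint V x)))\<^sup>2 + (norm (cadjoint V x))\<^sup>2"
proof -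
  have "cinner (x - V (cadjoint V x)) (V (cadjoint V x)) = 0"
    by (simp add: cinner_cadjoint_isometry_left[symmetric] cadjoint_isometry_diff
        cadjoint_isometry_cancel)
  then show ?thesis
    using norm_add_sq[of "x - V (cadjoint V x)" "V (cadjoint V x)"]
    by (simp add: isometry_norm[OF V])
qed

end

section \<open>Finite-dimensional subspaces\<close>

definition orthonormal :: "'a::cinner_space set \<Rightarrow> bool" where
  "orthonormal E \<longleftrightarrow>
    (\<forall>e\<in>E. cinner e e = 1) \<and> (\<forall>e\<in>E. \<forall>e'\<in>E. e \<noteq> e' \<longrightarrow> cinner e e' = 0)"

lemma orthonormal_coefficient:
  assumes "finite E" and "orthonormal E" and "e0 \<in> E"
  shows "cinner (\<Sum>e\<in>E. scaleC (c e) e) e0 = c e0"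
proof -
  have "cinner (\<Sum>e\<in>E. scaleC (c e) e) e0 = (\<Sum>e\<in>E. c e * cinner e e0)"
    by (simp add: cinner_sum_left cinner_scaleC_left)
  also have "\<dots> = (\<Sum>e\<in>E. if e = e0 then c e else 0)"
    using assms(2,3) by (intro sum.cong) (auto simp: orthonormal_def)
  also have "\<dots> = c e0"
    using assms(1,3) by simp
  finally show ?thesis .
qed

lemma orthonormal_expansion:
  assumes "finite E" and "orthonormal E" and "w \<in> cvs.span E"
  shows "w = (\<Sum>e\<in>E. scaleC (cinner w e) e)"
proof -
  obtain c where w: "w = (\<Sum>e\<in>E. scaleC (c e) e)"
    using assms(3) cvs.span_finite[OF assms(1)] by auto
  then have "cinner w e = c e" if "e \<in> E" for e
    using orthonormal_coefficient[OF assms(1,2) that] by simp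
  then show ?thesis
    using w by (metis (no_types, lifting) sum.cong)
qed

lemma orthonormal_coefficient_bound:
  assumes "finite E" and "orthonormal E" and "w \<in> cvs.span E" and "e0 \<in> E"
  shows "cmod (cinner w e0) \<le> norm w"
proof -
  have "cinner w w = (\<Sum>e\<in>E. cinner w e * cinner e w)"
    by (subst (1) orthonormal_expansion[OF assms(1-3)])
      (simp add: cinner_sum_left cinner_scaleC_left)
  also have "\<dots> = complex_of_real (\<Sum>e\<in>E. (cmod (cinner w e))\<^sup>2)"
    by (simp only: of_real_sum complex_norm_square cinner_commute[of _ w])
  finally have "(norm w)\<^sup>2 = (\<Sum>e\<in>E. (cmod (cinner w e))\<^sup>2)"
    by (simp only: cinner_self_norm of_real_eq_iff)
  moreover have "(cmod (cinner w e0))\<^sup>2 \<le> (\<Sum>e\<in>E. (cmod (cinner w e))\<^sup>2)"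
    using assms(1,4) by (intro member_le_sum) auto
  ultimately show ?thesis
    by (simp add: power2_le_imp_le)
qed

lemma orthonormal_extend:
  assumes fin: "finite E" and on: "orthonormal E"
  shows "\<exists>E'. finite E' \<and> orthonormal E' \<and> cvs.span E' = cvs.span (insert x E)"
proof -
  define p where "p = (\<Sum>e\<in>E. scaleC (cinner x e) e)"
  define r where "r = x - p"
  have p_span: "p \<in> cvs.span E"
    unfolding p_def by (intro cvs.span_sum cvs.span_scale cvs.span_base)
  have r_orth: "cinner r e = 0" if "e \<in> E" for e
    using orthonormal_coefficient[OF fin on that, of "\<lambda>e. cinner x e"]
    by (simp add: r_def p_def cinner_diff_left)
  show ?thesis
  proof (cases "r = 0")
    case True
    then have "x \<in> cvs.span E"
      using p_span by (simp add: r_def)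
    then show ?thesis
      using fin on by (intro exI[of _ E]) (simp add: cvs.span_redundant)
  next
    case False
    define e0 where "e0 = scaleC (complex_of_real (1 / norm r)) r"
    have "cinner e0 e0 = 1"
      using False by (simp add: e0_def cinner_self_norm norm_divide)
    moreover have "cinner e0 e = 0" "cinner e e0 = 0" if "e \<in> E" for e
      using r_orth[OF that]
      by (simp_all add: e0_def cinner_scaleC_left cinner_scaleC_right,
          metis cinner_commute complex_cnj_zero)
    ultimately have on': "orthonormal (insert e0 E)"
      using on unfolding orthonormal_def by blast
    have "insert e0 E \<subseteq> cvs.span (insert x E)"
    proof -
      have "x - p \<in> cvs.span (insert x E)"
        using p_span cvs.span_mono[of E "insert x E"]
        by (intro cvs.span_diff) (auto intro: cvs.span_base)
      then have "e0 \<in> cvs.span (insert x E)"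
        by (simp add: e0_def r_def cvs.span_scale)
      then show ?thesis
        using cvs.span_superset[of "insert x E"] by blast
    qed
    moreover have "insert x E \<subseteq> cvs.span (insert e0 E)"
    proof -
      have "x = scaleC (complex_of_real (norm r)) e0 + p"
        using False by (simp add: e0_def r_def)
      then have "x \<in> cvs.span (insert e0 E)"
        using p_span cvs.span_mono[of E "insert e0 E"]
        by (metis cvs.span_add cvs.span_scale cvs.span_base insertI1 subset_insertI subsetD)
      then show ?thesis
        using cvs.span_superset[of "insert e0 E"] by blast
    qed
    ultimately have "cvs.span (insert e0 E) = cvs.span (insert x E)"
      using cvs.span_minimal[OF _ cvs.subspace_span] by blast
    then show ?thesis
      using fin on' by (intro exI[of _ "insert e0 E"]) auto
  qed
qed

lemma gram_schmidt:
  assumes "finite F"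
  shows "\<exists>E. finite E \<and> orthonormal E \<and> cvs.span E = cvs.span F"
  using assms
proof (induction F rule: finite_induct)
  case empty
  show ?case
    by (intro exI[of _ "{}"]) (auto simp: orthonormal_def)
next
  case (insert x F)
  then obtain E where "finite E" "orthonormal E" "cvs.span E = cvs.span F"
    by blast
  moreover have "cvs.span (insert x E) = cvs.span (insert x F)"
    using calculation(3) by (simp add: cvs.span_insert)
  ultimately show ?case
    using orthonormal_extend by metis
qed

lemma finite_dim_orthonormal_basis:
  assumes W: "csubspace W" and "cfinite_dim W"
  obtains E where "finite E" "orthonormal E" "W = cvs.span E"
proof -
  obtain F where "finite F" "F \<subseteq> W" "W \<subseteq> cspan F"
    using assms(2) by (auto simp: cfinite_dim_def)
  moreover have "cspan F \<subseteq> cvs.span F"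
    unfolding cspan_def by (auto intro: cvs.span_sum cvs.span_scale cvs.span_base)
  moreover have "cvs.span F \<subseteq> W"
    using W \<open>F \<subseteq> W\<close> by (simp add: cvs.span_minimal csubspace_iff_cvs_subspace)
  ultimately have "W = cvs.span F"
    by blast
  moreover obtain E where "finite E" "orthonormal E" "cvs.span E = cvs.span F"
    using gram_schmidt[OF \<open>finite F\<close>] by blast
  ultimately show ?thesis
    using that by simp
qed

lemma span_subset_if_independent_card_eq:
  assumes "finite E" and S: "cvs.independent S" "S \<subseteq> cvs.span E" and "card S = card E"
  shows "cvs.span E \<subseteq> cvs.span S"
proof
  fix a
  assume a: "a \<in> cvs.span E"
  show "a \<in> cvs.span S"
  proof (rule ccontr)
    assume "a \<notin> cvs.span S"
    then have "cvs.independent (insert a S)" and "a \<notin> S"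
      using cvs.independent_insertI[OF _ S(1)] cvs.span_base by auto
    moreover have "insert a S \<subseteq> cvs.span E"
      using a S(2) by blast
    ultimately show False
      using cvs.independent_span_bound[OF assms(1)] assms(4) by fastforce
  qed
qed

lemma combination_in_span: "(\<Sum>e\<in>E. scaleC (c e) e) \<in> cvs.span E"
  by (intro cvs.span_sum cvs.span_scale cvs.span_base)

context
  fixes T :: "'a::cinner_space \<Rightarrow> 'a" and E :: "'a set"
  assumes T: "bounded_clinear T" and fin: "finite E" and on: "orthonormal E"
    and T_into: "T ` cvs.span E \<subseteq> cvs.span E" and inj: "inj_on T (cvs.span E)"
begin

lemma inj_on_basis: "inj_on T E"
  using inj cvs.span_superset inj_on_subset by blast

lemma combination_image: "(\<Sum>v\<in>T ` E. scaleC (f v) v) = T (\<Sum>e\<in>E. scaleC (f (T e)) e)"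
  using sum.reindex[OF inj_on_basis, of "\<lambda>v. scaleC (f v) v"]
  by (simp add: bounded_clinear_sum[OF T] bounded_clinear_scaleC[OF T])

lemma independent_image_basis: "cvs.independent (T ` E)"
proof (rule cvs.independent_if_scalars_zero[OF finite_imageI[OF fin]])
  fix f v
  assume sum_0: "(\<Sum>x\<in>T ` E. scaleC (f x) x) = 0" and "v \<in> T ` E"
  then obtain e0 where "e0 \<in> E" "v = T e0"
    by blast
  have "T (\<Sum>e\<in>E. scaleC (f (T e)) e) = T 0"
    using sum_0 combination_image bounded_clinear_zero[OF T] by simp
  then have "(\<Sum>e\<in>E. scaleC (f (T e)) e) = 0"
    by (rule inj_onD[OF inj _ combination_in_span cvs.span_zero])
  then show "f v = 0"
    using orthonormal_coefficient[OF fin on \<open>e0 \<in> E\<close>, of "\<lambda>e. f (T e)"] \<open>v = T e0\<close>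
    by (metis cinner_zero_left)
qed

lemma injective_endomorphism_onto: "cvs.span E \<subseteq> T ` cvs.span E"
proof -
  have "T ` E \<subseteq> cvs.span E"
    using T_into cvs.span_superset by blast
  then have "cvs.span E \<subseteq> cvs.span (T ` E)"
    using span_subset_if_independent_card_eq[OF fin independent_image_basis]
      card_image[OF inj_on_basis]
    by blast
  also have "cvs.span (T ` E) \<subseteq> T ` cvs.span E"
  proof
    fix y
    assume "y \<in> cvs.span (T ` E)"
    then obtain u where "y = (\<Sum>v\<in>T ` E. scaleC (u v) v)"
      using cvs.span_finite[OF finite_imageI[OF fin]] by auto
    then have "y = T (\<Sum>e\<in>E. scaleC (u (T e)) e)"
      by (simp add: combination_image)
    then show "y \<in> T ` cvs.span E"
      by (rule image_eqI[OF _ combination_in_span])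
  qed
  finally show ?thesis .
qed

text \<open>The inverse of T on the span is estimated through the coefficients of T w in the
  orthonormal basis E and fixed preimages of the basis vectors.\<close>

lemma injective_endomorphism_inverse_bound: "\<exists>C\<ge>0. \<forall>w\<in>cvs.span E. norm w \<le> C * norm (T w)"
proof -
  have "\<forall>e\<in>E. \<exists>s\<in>cvs.span E. T s = e"
    using injective_endomorphism_onto cvs.span_superset by blast
  then obtain s where s_in: "\<And>e. e \<in> E \<Longrightarrow> s e \<in> cvs.span E"
    and T_s: "\<And>e. e \<in> E \<Longrightarrow> T (s e) = e"
    by metis
  define C where "C = (\<Sum>e\<in>E. norm (s e))"
  have "norm w \<le> C * norm (T w)" if w: "w \<in> cvs.span E" for w
  proof -
    define u where "u = T w"
    have u: "u \<in> cvs.span E"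
      using T_into w by (auto simp: u_def)
    define w' where "w' = (\<Sum>e\<in>E. scaleC (cinner u e) (s e))"
    have "w' \<in> cvs.span E"
      unfolding w'_def using s_in by (intro cvs.span_sum cvs.span_scale) auto
    moreover have "T w' = T w"
      unfolding w'_def
      by (simp add: bounded_clinear_sum[OF T] bounded_clinear_scaleC[OF T] T_s
          flip: orthonormal_expansion[OF fin on u] u_def)
    ultimately have "w = w'"
      using inj w by (auto dest: inj_onD)
    then have "norm w \<le> (\<Sum>e\<in>E. norm (scaleC (cinner u e) (s e)))"
      unfolding w'_def by (simp only: norm_sum)
    also have "\<dots> = (\<Sum>e\<in>E. cmod (cinner u e) * norm (s e))"
      by simp
    also have "\<dots> \<le> (\<Sum>e\<in>E. norm u * norm (s e))"
      by (intro sum_mono mult_right_mono orthonormal_coefficient_bound[OF fin on u]) auto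
    finally show ?thesis
      by (simp add: C_def u_def sum_distrib_left mult.commute)
  qed
  moreover have "C \<ge> 0"
    by (simp add: C_def sum_nonneg)
  ultimately show ?thesis
    by blast
qed

lemma injective_endomorphism_bounded_below: "\<exists>m>0. \<forall>w\<in>cvs.span E. m * norm w \<le> norm (T w)"
proof -
  obtain C where "C \<ge> 0" and bound: "\<And>w. w \<in> cvs.span E \<Longrightarrow> norm w \<le> C * norm (T w)"
    using injective_endomorphism_inverse_bound by blast
  have "(1 / (C + 1)) * norm w \<le> norm (T w)" if "w \<in> cvs.span E" for w
  proof -
    have "(1 / (C + 1)) * norm w \<le> (C / (C + 1)) * norm (T w)"
      using \<open>C \<ge> 0\<close> bound[OF that] by (simp add: divide_right_mono)
    also have "\<dots> \<le> 1 * norm (T w)"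
      using \<open>C \<ge> 0\<close> by (intro mult_right_mono) auto
    finally show ?thesis
      by simp
  qed
  moreover have "1 / (C + 1) > 0"
    using \<open>C \<ge> 0\<close> by simp
  ultimately show ?thesis
    by blast
qed

end

lemma finite_dim_injective_endomorphism:
  fixes T :: "'a::cinner_space \<Rightarrow> 'a"
  assumes W: "csubspace W" "cfinite_dim W" and T: "bounded_clinear T" and "T ` W \<subseteq> W"
    and ker: "\<forall>x\<in>W. T x = 0 \<longrightarrow> x = 0"
  shows "W \<subseteq> T ` W" and "\<exists>m>0. \<forall>w\<in>W. m * norm w \<le> norm (T w)"
proof -
  obtain E where E: "finite E" "orthonormal E" "W = cvs.span E"
    using finite_dim_orthonormal_basis[OF W] .
  have "inj_on T W"
  proof (rule inj_onI)
    fix x y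
    assume "x \<in> W" "y \<in> W" "T x = T y"
    then have "x - y \<in> W" "T (x - y) = 0"
      using W(1) bounded_clinear_diff[OF T]
      by (auto simp: csubspace_iff_cvs_subspace cvs.subspace_diff)
    then show "x = y"
      using ker by auto
  qed
  then show "W \<subseteq> T ` W" and "\<exists>m>0. \<forall>w\<in>W. m * norm w \<le> norm (T w)"
    using injective_endomorphism_onto[OF T E(1,2)] injective_endomorphism_bounded_below[OF T E(1,2)]
      \<open>T ` W \<subseteq> W\<close> E(3)
    by simp_all
qed

section \<open>Doubly non-commuting isometries\<close>

locale dnc_isometries =
  fixes n :: nat
    and z :: "nat \<Rightarrow> nat \<Rightarrow> complex"
    and V :: "nat \<Rightarrow> 'h::{cinner_space, complete_space} \<Rightarrow> 'h"
  assumes z_unimod: "\<forall>i\<in>{1..n}. \<forall>j\<in>{1..n}. i \<noteq> j \<longrightarrow> norm (z i j) = 1"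
    and z_sym: "\<forall>i\<in>{1..n}. \<forall>j\<in>{1..n}. i \<noteq> j \<longrightarrow> z j i = cnj (z i j)"
    and dnc: "doubly_noncommuting n z V"
begin

abbreviation A :: "nat \<Rightarrow> 'h \<Rightarrow> 'h" where
  "A i \<equiv> cadjoint (V i)"

lemma isometry: "i \<in> {1..n} \<Longrightarrow> isometry_op (V i)"
  using dnc by (simp add: doubly_noncommuting_def)

lemma V_scaleC: "i \<in> {1..n} \<Longrightarrow> V i (scaleC c x) = scaleC c (V i x)"
  by (rule bounded_clinear_scaleC[OF isometry_bounded_clinear[OF isometry]])

lemma V_zero: "i \<in> {1..n} \<Longrightarrow> V i 0 = 0"
  by (rule bounded_clinear_zero[OF isometry_bounded_clinear[OF isometry]])

lemma cinner_V_A: "i \<in> {1..n} \<Longrightarrow> cinner (V i x) y = cinner x (A i y)"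
  by (rule cinner_cadjoint_isometry[OF isometry])

lemma cinner_A_V: "i \<in> {1..n} \<Longrightarrow> cinner (A i y) x = cinner y (V i x)"
  by (rule cinner_cadjoint_isometry_left[OF isometry])

lemma A_add: "i \<in> {1..n} \<Longrightarrow> A i (x + y) = A i x + A i y"
  by (rule cadjoint_isometry_add[OF isometry])

lemma A_diff: "i \<in> {1..n} \<Longrightarrow> A i (x - y) = A i x - A i y"
  by (rule cadjoint_isometry_diff[OF isometry])

lemma A_scaleC: "i \<in> {1..n} \<Longrightarrow> A i (scaleC c x) = scaleC c (A i x)"
  by (rule cadjoint_isometry_scaleC[OF isometry])

lemma A_zero: "i \<in> {1..n} \<Longrightarrow> A i 0 = 0"
  by (rule cadjoint_isometry_zero[OF isometry])

lemma A_V: "i \<in> {1..n} \<Longrightarrow> A i (V i x) = x"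
  by (rule cadjoint_isometry_cancel[OF isometry])

lemma A_V_commute:
  "i \<in> {1..n} \<Longrightarrow> j \<in> {1..n} \<Longrightarrow> i \<noteq> j \<Longrightarrow>
    A i (V j x) = scaleC (cnj (z i j)) (V j (A i x))"
  using dnc by (simp add: doubly_noncommuting_def)

lemma V_V_commute:
  assumes i: "i \<in> {1..n}" and j: "j \<in> {1..n}" and "i \<noteq> j"
  shows "V j (V i x) = scaleC (cnj (z i j)) (V i (V j x))"
proof -
  define c where "c = cnj (z i j)"
  define D where "D = V j (V i x) - scaleC c (V i (V j x))"
  have "A i D = 0"
    by (simp add: D_def c_def A_diff[OF i] A_scaleC[OF i] A_V[OF i]
        A_V_commute[OF i j \<open>i \<noteq> j\<close>])
  moreover have "A j D = 0"
  proof -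
    have "norm (z i j) = 1"
      using z_unimod i j \<open>i \<noteq> j\<close> by blast
    then have "c * z i j = 1"
      using complex_norm_square[of "z i j"] by (simp add: c_def mult.commute)
    moreover have "z j i = cnj (z i j)"
      using z_sym i j \<open>i \<noteq> j\<close> by blast
    ultimately show ?thesis
      using \<open>i \<noteq> j\<close>
      by (simp add: D_def A_diff[OF j] A_scaleC[OF j] A_V_commute[OF j i] A_V[OF j])
  qed
  moreover have "cinner D D = cinner (A j D) (V i x) - cnj c * cinner (A i D) (V j x)"
    by (subst (2) D_def)
      (simp add: cinner_diff_right cinner_scaleC_right cinner_A_V[OF i] cinner_A_V[OF j])
  ultimately have "cinner D D = 0"
    by simp
  then show ?thesis
    by (simp add: D_def c_def)
qed

lemma A_A_commute:
  assumes i: "i \<in> {1..n}" and j: "j \<in> {1..n}" and "i \<noteq> j"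
  shows "A j (A i x) = scaleC (z j i) (A i (A j x))"
proof (rule cinner_ext_left)
  fix u
  have "cinner (A j (A i x)) u = cinner x (V i (V j u))"
    by (simp add: cinner_A_V[OF i] cinner_A_V[OF j])
  also have "\<dots> = z j i * cinner (A i (A j x)) u"
    using \<open>i \<noteq> j\<close>
    by (simp add: V_V_commute[OF j i] cinner_scaleC_right cinner_A_V[OF i] cinner_A_V[OF j])
  finally show "cinner (A j (A i x)) u = cinner (scaleC (z j i) (A i (A j x))) u"
    by (simp add: cinner_scaleC_left)
qed

lemma A_pow_zero: "i \<in> {1..n} \<Longrightarrow> (A i ^^ N) 0 = 0"
  by (induct N) (simp_all add: A_zero)

lemma A_pow_add: "i \<in> {1..n} \<Longrightarrow> (A i ^^ N) (x + y) = (A i ^^ N) x + (A i ^^ N) y"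
  by (induct N) (simp_all add: A_add)

lemma A_pow_diff: "i \<in> {1..n} \<Longrightarrow> (A i ^^ N) (x - y) = (A i ^^ N) x - (A i ^^ N) y"
  by (induct N) (simp_all add: A_diff)

lemma A_pow_scaleC: "i \<in> {1..n} \<Longrightarrow> (A i ^^ N) (scaleC c x) = scaleC c ((A i ^^ N) x)"
  by (induct N) (simp_all add: A_scaleC)

lemma A_pow_A_commute:
  assumes i: "i \<in> {1..n}" and j: "j \<in> {1..n}" and "i \<noteq> j"
  shows "(A j ^^ N) (A i x) = scaleC (z j i ^ N) (A i ((A j ^^ N) x))"
  by (induct N)
    (simp_all add: A_scaleC[OF j] A_scaleC[OF i] A_A_commute[OF i j \<open>i \<noteq> j\<close>] mult.commute)

lemma A_pow_V_commute:
  assumes i: "i \<in> {1..n}" and j: "j \<in> {1..n}" and "i \<noteq> j"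
  shows "(A j ^^ N) (V i x) = scaleC (cnj (z j i) ^ N) (V i ((A j ^^ N) x))"
  using \<open>i \<noteq> j\<close>
  by (induct N) (simp_all add: A_scaleC[OF j] V_scaleC[OF i] A_V_commute[OF j i] mult.commute)

lemma A_pow_eq_0_mono:
  assumes j: "j \<in> {1..n}" and "(A j ^^ N) x = 0" and "N \<le> M"
  shows "(A j ^^ M) x = 0"
proof -
  obtain K where "M = K + N"
    using \<open>N \<le> M\<close> le_iff_add by (metis add.commute)
  then show ?thesis
    using assms(2) by (simp add: funpow_add A_pow_zero[OF j])
qed

definition W :: "'h set" where
  "W = (\<Inter>i\<in>{1..n}. {x. A i x = 0})"

lemma csubspace_W: "csubspace W"
  unfolding csubspace_def W_def by (auto simp: A_zero A_add A_scaleC)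

inductive_set Wgen :: "'h set" where
  W: "x \<in> W \<Longrightarrow> x \<in> Wgen"
| V: "x \<in> Wgen \<Longrightarrow> i \<in> {1..n} \<Longrightarrow> V i x \<in> Wgen"
| add: "x \<in> Wgen \<Longrightarrow> y \<in> Wgen \<Longrightarrow> x + y \<in> Wgen"
| scaleC: "x \<in> Wgen \<Longrightarrow> scaleC c x \<in> Wgen"

lemma zero_in_Wgen: "0 \<in> Wgen"
  using csubspace_W Wgen.W by (simp add: csubspace_def)

lemma csubspace_Wgen: "csubspace Wgen"
  by (simp add: csubspace_def zero_in_Wgen Wgen.add Wgen.scaleC)

lemma A_Wgen: "x \<in> Wgen \<Longrightarrow> j \<in> {1..n} \<Longrightarrow> A j x \<in> Wgen"
proof (induction rule: Wgen.induct)
  case (W x)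
  then show ?case
    using zero_in_Wgen by (simp add: W_def)
next
  case (V x i)
  then show ?case
    by (cases "i = j") (simp_all add: A_V A_V_commute Wgen.V Wgen.scaleC)
next
  case (add x y)
  then show ?case
    by (simp add: A_add Wgen.add)
next
  case (scaleC x c)
  then show ?case
    by (simp add: A_scaleC Wgen.scaleC)
qed

definition annihilated :: "(nat \<Rightarrow> nat) \<Rightarrow> 'h \<Rightarrow> bool" where
  "annihilated N x \<longleftrightarrow> (\<forall>j\<in>{1..n}. (A j ^^ N j) x = 0)"

lemma Wgen_annihilated: "x \<in> Wgen \<Longrightarrow> \<exists>N. annihilated (\<lambda>_. N) x"
proof (induction rule: Wgen.induct)
  case (W x)
  then show ?case
    by (intro exI[of _ 1]) (simp add: W_def annihilated_def)
next
  case (V x i)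
  then obtain N where N: "annihilated (\<lambda>_. N) x"
    by blast
  have "(A j ^^ Suc N) (V i x) = 0" if j: "j \<in> {1..n}" for j
  proof (cases "j = i")
    case True
    then show ?thesis
      using N j by (simp add: annihilated_def A_V funpow_Suc_right del: funpow.simps)
  next
    case False
    have "(A j ^^ Suc N) x = 0"
      using N j by (simp add: annihilated_def A_zero)
    then show ?thesis
      using A_pow_V_commute[OF V.hyps(2) j, of "Suc N" x] False
      by (simp add: V_zero[OF V.hyps(2)] del: funpow.simps)
  qed
  then show ?case
    unfolding annihilated_def by blast
next
  case (add x y)
  then obtain N1 N2 where "annihilated (\<lambda>_. N1) x" "annihilated (\<lambda>_. N2) y"
    by blast
  then have "annihilated (\<lambda>_. max N1 N2) (x + y)"
    unfolding annihilated_def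
    using A_pow_eq_0_mono[of _ N1 x "max N1 N2"] A_pow_eq_0_mono[of _ N2 y "max N1 N2"]
    by (simp add: A_pow_add)
  then show ?case
    by blast
next
  case (scaleC x c)
  then show ?case
    by (auto simp: annihilated_def A_pow_scaleC)
qed

text \<open>Splitting x = (x - V_i A_i x) + V_i A_i x lowers the annihilation orders: the first
  part is killed by A_i itself, and A_i x is killed by one power of A_i less.
  The commutation relations carry the orders of the other A_j along.\<close>

lemma annihilated_kernel_part:
  assumes i: "i \<in> {1..n}" and x: "annihilated N x"
  shows "annihilated (N(i := 1)) (x - V i (A i x))"
  unfolding annihilated_def
proof
  fix j
  assume j: "j \<in> {1..n}"
  show "(A j ^^ (N(i := 1)) j) (x - V i (A i x)) = 0"
  proof (cases "j = i")
    case True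
    then show ?thesis
      by (simp add: A_diff[OF i] A_V[OF i])
  next
    case False
    have "(A j ^^ N j) (A i x) = 0"
      using A_pow_A_commute[OF i j, of "N j" x] False x j by (simp add: annihilated_def A_zero[OF i])
    then show ?thesis
      using False x j
      by (simp add: annihilated_def A_pow_diff[OF j] A_pow_V_commute[OF i j] V_zero[OF i])
  qed
qed

lemma annihilated_range_part:
  assumes i: "i \<in> {1..n}" and x: "annihilated N x"
  shows "annihilated (N(i := N i - 1)) (A i x)"
  unfolding annihilated_def
proof
  fix j
  assume j: "j \<in> {1..n}"
  show "(A j ^^ (N(i := N i - 1)) j) (A i x) = 0"
  proof (cases "j = i")
    case True
    have x_i: "(A i ^^ N i) x = 0"
      using x i by (simp add: annihilated_def)
    show ?thesis
    proof (cases "N i")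
      case 0
      then show ?thesis
        using x_i True by (simp add: A_zero[OF i])
    next
      case (Suc k)
      then show ?thesis
        using x_i True by (simp add: funpow_Suc_right del: funpow.simps)
    qed
  next
    case False
    then show ?thesis
      using A_pow_A_commute[OF i j, of "N j" x] x j by (simp add: annihilated_def A_zero[OF i])
  qed
qed

end

locale pure_dnc_isometries = dnc_isometries n z V
  for n z and V :: "nat \<Rightarrow> 'h::{cinner_space, complete_space} \<Rightarrow> 'h" +
  assumes pure: "\<forall>i\<in>{1..n}. pure_isometry (V i)"
begin

definition Wgen_perp :: "'h set" where
  "Wgen_perp = {y. \<forall>u\<in>Wgen. cinner y u = 0}"

lemma V_Wgen_perp: "y \<in> Wgen_perp \<Longrightarrow> i \<in> {1..n} \<Longrightarrow> V i y \<in> Wgen_perp"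
  by (simp add: Wgen_perp_def cinner_V_A A_Wgen)

lemma A_Wgen_perp: "y \<in> Wgen_perp \<Longrightarrow> i \<in> {1..n} \<Longrightarrow> A i y \<in> Wgen_perp"
  by (simp add: Wgen_perp_def cinner_A_V Wgen.V)

text \<open>A Wold-type argument: if perp_ker (k - 1) = {0}, every y in perp_ker k equals
  V_k A_k y, so V_k is unitary on perp_ker k and purity of V_k forces perp_ker k = {0}.
  The induction starts since perp_ker 0 is contained in W, a subset of Wgen, and orthogonal to Wgen.\<close>

definition perp_ker :: "nat \<Rightarrow> 'h set" where
  "perp_ker k = {y \<in> Wgen_perp. \<forall>i\<in>{1..n}. k < i \<longrightarrow> A i y = 0}"

lemma perp_ker_0: "perp_ker 0 = {0}"
proof -
  have "y = 0" if "y \<in> perp_ker 0" for y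
  proof -
    have "y \<in> Wgen"
      using that by (auto simp: perp_ker_def W_def intro: Wgen.W)
    then have "cinner y y = 0"
      using that by (simp add: perp_ker_def Wgen_perp_def)
    then show ?thesis
      by simp
  qed
  then show ?thesis
    by (auto simp: perp_ker_def Wgen_perp_def A_zero)
qed

lemma csubspace_perp_ker: "csubspace (perp_ker k)"
  unfolding csubspace_def perp_ker_def Wgen_perp_def
  by (auto simp: A_zero A_add A_scaleC cinner_add_left cinner_scaleC_left)

lemma closed_perp_ker: "closed (perp_ker k)"
proof -
  have "perp_ker k = Wgen_perp \<inter> (\<Inter>i\<in>{i\<in>{1..n}. k < i}. {y. A i y = 0})"
    by (auto simp: perp_ker_def)
  moreover have "closed (\<Inter>i\<in>{i\<in>{1..n}. k < i}. {y. A i y = 0})"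
    by (intro closed_INT ballI closed_kernel_cadjoint_isometry isometry) auto
  ultimately show ?thesis
    by (simp add: closed_Int Wgen_perp_def closed_orthogonal_complement)
qed

lemma V_image_perp_ker:
  assumes k: "k \<in> {1..n}" and prev: "perp_ker (k - 1) = {0}"
  shows "V k ` perp_ker k = perp_ker k"
proof
  show "V k ` perp_ker k \<subseteq> perp_ker k"
    using k by (auto simp: perp_ker_def V_Wgen_perp A_V_commute V_zero)
  show "perp_ker k \<subseteq> V k ` perp_ker k"
  proof
    fix y
    assume y: "y \<in> perp_ker k"
    have a: "A k y \<in> perp_ker k"
      using y k A_A_commute[of k _ y] by (auto simp: perp_ker_def A_Wgen_perp A_zero)
    then have "V k (A k y) \<in> perp_ker k"
      using k by (auto simp: perp_ker_def V_Wgen_perp A_V_commute V_zero)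
    then have e: "y - V k (A k y) \<in> perp_ker k"
      using y csubspace_perp_ker by (simp add: csubspace_iff_cvs_subspace cvs.subspace_diff)
    have "A i (y - V k (A k y)) = 0" if "i \<in> {1..n}" "k - 1 < i" for i
    proof (cases "i = k")
      case True
      then show ?thesis
        using k by (simp add: A_diff A_V)
    next
      case False
      then show ?thesis
        using e that by (auto simp: perp_ker_def)
    qed
    then have "y - V k (A k y) \<in> perp_ker (k - 1)"
      using e by (auto simp: perp_ker_def)
    then have "y = V k (A k y)"
      using prev by simp
    then show "y \<in> V k ` perp_ker k"
      using a by blast
  qed
qed

lemma perp_ker_eq_0: "k \<le> n \<Longrightarrow> perp_ker k = {0}"
proof (induction k)
  case 0
  show ?case
    by (rule perp_ker_0)
next
  case (Suc k)
  then have "V (Suc k) ` perp_ker (Suc k) = perp_ker (Suc k)"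
    by (intro V_image_perp_ker) auto
  moreover have "pure_isometry (V (Suc k))"
    using pure Suc.prems by simp
  ultimately show ?case
    using csubspace_perp_ker closed_perp_ker by (simp add: pure_isometry_def)
qed

lemma closure_Wgen: "closure Wgen = UNIV"
proof -
  have "x \<in> closure Wgen" for x
  proof -
    obtain p where p: "p \<in> closure Wgen" "\<forall>u\<in>closure Wgen. cinner (x - p) u = 0"
      using orthogonal_projection_exists[OF csubspace_closure[OF csubspace_Wgen] closed_closure]
      by blast
    then have "x - p \<in> perp_ker n"
      using closure_subset by (auto simp: perp_ker_def Wgen_perp_def)
    then show ?thesis
      using perp_ker_eq_0[of n] p(1) by simp
  qed
  then show ?thesis
    by blast
qed

end

section \<open>The intertwining operator\<close>

locale dnc_intertwiner = pure_dnc_isometries n z V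
  for n z and V :: "nat \<Rightarrow> 'h::{cinner_space, complete_space} \<Rightarrow> 'h" +
  fixes T :: "'h \<Rightarrow> 'h"
  assumes fin: "cfinite_dim (\<Inter>i\<in>{1..n}. {x. A i x = 0})"
    and T: "bounded_clinear T"
    and comm: "\<forall>i\<in>{1..n}. \<exists>\<tau>. norm \<tau> = 1 \<and> (\<forall>x. T (V i x) = scaleC \<tau> (V i (T x)))"
    and inv: "\<forall>i\<in>{1..n}. T ` {x. A i x = 0} \<subseteq> {x. A i x = 0}"
    and inj: "\<forall>x\<in>(\<Inter>i\<in>{1..n}. {x. A i x = 0}). T x = 0 \<longrightarrow> x = 0"
begin

definition tau :: "nat \<Rightarrow> complex" where
  "tau i = (SOME \<tau>. norm \<tau> = 1 \<and> (\<forall>x. T (V i x) = scaleC \<tau> (V i (T x))))"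

lemma tau: assumes "i \<in> {1..n}"
  shows norm_tau: "norm (tau i) = 1" and T_V: "T (V i x) = scaleC (tau i) (V i (T x))"
proof -
  have "\<exists>\<tau>. norm \<tau> = 1 \<and> (\<forall>x. T (V i x) = scaleC \<tau> (V i (T x)))"
    using comm assms by blast
  from someI_ex[OF this] show "norm (tau i) = 1" "T (V i x) = scaleC (tau i) (V i (T x))"
    unfolding tau_def by blast+
qed

lemma A_T: assumes i: "i \<in> {1..n}" shows "A i (T x) = scaleC (tau i) (T (A i x))"
proof -
  define e where "e = x - V i (A i x)"
  have "A i e = 0"
    by (simp add: e_def A_diff[OF i] A_V[OF i])
  have "A i (T x) = A i (T (e + V i (A i x)))"
    by (simp add: e_def)
  also have "\<dots> = A i (T e) + A i (T (V i (A i x)))"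
    by (simp only: bounded_clinear_add[OF T] A_add[OF i])
  also have "A i (T e) = 0"
    using inv i \<open>A i e = 0\<close> by blast
  also have "A i (T (V i (A i x))) = scaleC (tau i) (T (A i x))"
    by (simp add: T_V[OF i] A_scaleC[OF i] A_V[OF i])
  finally show ?thesis
    by simp
qed

lemma norm_sq_split_T:
  assumes i: "i \<in> {1..n}"
  shows "(norm (T y))\<^sup>2 = (norm (T (y - V i (A i y))))\<^sup>2 + (norm (T (A i y)))\<^sup>2"
proof -
  have "T y - V i (A i (T y)) = T (y - V i (A i y))"
    by (simp add: A_T[OF i] V_scaleC[OF i] T_V[OF i] bounded_clinear_diff[OF T])
  moreover have "norm (A i (T y)) = norm (T (A i y))"
    by (simp add: A_T[OF i] norm_tau[OF i])
  ultimately show ?thesis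
    using norm_sq_split_isometry[OF isometry[OF i], of "T y"] by simp
qed

lemma bounded_below_split:
  assumes i: "i \<in> {1..n}" and "0 \<le> m"
    and "m * norm (y - V i (A i y)) \<le> norm (T (y - V i (A i y)))"
    and "m * norm (A i y) \<le> norm (T (A i y))"
  shows "m * norm y \<le> norm (T y)"
proof -
  have "(m * norm y)\<^sup>2 = (m * norm (y - V i (A i y)))\<^sup>2 + (m * norm (A i y))\<^sup>2"
    using norm_sq_split_isometry[OF isometry[OF i], of y] by (simp add: power_mult_distrib algebra_simps)
  also have "\<dots> \<le> (norm (T (y - V i (A i y))))\<^sup>2 + (norm (T (A i y)))\<^sup>2"
    using assms by (intro add_mono power_mono) auto
  also have "\<dots> = (norm (T y))\<^sup>2"
    by (rule norm_sq_split_T[OF i, symmetric])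
  finally show ?thesis
    by (rule power2_le_imp_le) simp
qed

lemma T_on_W: "W \<subseteq> T ` W" "\<exists>m>0. \<forall>w\<in>W. m * norm w \<le> norm (T w)"
proof -
  have "cfinite_dim W" "\<forall>x\<in>W. T x = 0 \<longrightarrow> x = 0"
    using fin inj by (simp_all only: W_def)
  moreover have "T ` W \<subseteq> W"
    using inv unfolding W_def by blast
  ultimately show "W \<subseteq> T ` W" "\<exists>m>0. \<forall>w\<in>W. m * norm w \<le> norm (T w)"
    using finite_dim_injective_endomorphism[OF csubspace_W _ T] by blast+
qed

lemma bounded_below_annihilated:
  assumes "0 \<le> m" and m: "\<And>w. w \<in> W \<Longrightarrow> m * norm w \<le> norm (T w)"
  shows "annihilated N y \<Longrightarrow> m * norm y \<le> norm (T y)"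
proof (induction "sum N {1..n}" arbitrary: N y rule: less_induct)
  case less
  show ?case
  proof (cases "\<forall>i\<in>{1..n}. N i \<le> 1")
    case True
    have "A i y = 0" if i: "i \<in> {1..n}" for i
    proof -
      have "(A i ^^ N i) y = 0"
        using less.prems i by (simp add: annihilated_def)
      moreover have "N i \<le> 1"
        using True i by blast
      ultimately show ?thesis
        using A_zero[OF i] by (cases "N i") auto
    qed
    then show ?thesis
      by (intro m) (auto simp: W_def)
  next
    case False
    then obtain i where i: "i \<in> {1..n}" and "2 \<le> N i"
      by force
    have kernel_part_smaller: "sum (N(i := 1)) {1..n} < sum N {1..n}"
      and range_part_smaller: "sum (N(i := N i - 1)) {1..n} < sum N {1..n}"
      by (rule sum_strict_mono_ex1; use i \<open>2 \<le> N i\<close> in auto)+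
    have "m * norm (y - V i (A i y)) \<le> norm (T (y - V i (A i y)))"
      using less.hyps[OF kernel_part_smaller annihilated_kernel_part[OF i less.prems]] .
    moreover have "m * norm (A i y) \<le> norm (T (A i y))"
      using less.hyps[OF range_part_smaller annihilated_range_part[OF i less.prems]] .
    ultimately show ?thesis
      by (rule bounded_below_split[OF i \<open>0 \<le> m\<close>])
  qed
qed

lemma Wgen_subset_range: "x \<in> Wgen \<Longrightarrow> x \<in> range T"
proof (induction rule: Wgen.induct)
  case (W x)
  then show ?case
    using T_on_W(1) by blast
next
  case (V x i)
  then obtain y where "x = T y"
    by blast
  have "tau i \<noteq> 0"
    using norm_tau[OF V.hyps(2)] by auto
  then have "T (V i (scaleC (inverse (tau i)) y)) = V i x"
    using \<open>x = T y\<close> V.hyps(2) by (simp add: T_V bounded_clinear_scaleC[OF T] V_scaleC)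
  then show ?case
    by (metis rangeI)
next
  case (add x y)
  then obtain a b where "x = T a" "y = T b"
    by blast
  then have "x + y = T (a + b)"
    by (simp add: bounded_clinear_add[OF T])
  then show ?case
    by simp
next
  case (scaleC x c)
  then obtain a where "x = T a"
    by blast
  then have "scaleC c x = T (scaleC c a)"
    by (simp add: bounded_clinear_scaleC[OF T])
  then show ?case
    by simp
qed

lemma bounded_below: "\<exists>m>0. \<forall>x. m * norm x \<le> norm (T x)"
proof -
  obtain m where "m > 0" and m: "\<forall>w\<in>W. m * norm w \<le> norm (T w)"
    using T_on_W(2) by blast
  have "m * norm x \<le> norm (T x)" for x
  proof (rule bounded_below_on_closure)
    show "continuous_on UNIV T"
      using T by (simp add: bounded_clinear_def linear_continuous_on)
    show "x \<in> closure Wgen"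
      by (simp add: closure_Wgen)
    show "m * norm y \<le> norm (T y)" if "y \<in> Wgen" for y
      using Wgen_annihilated[OF that] bounded_below_annihilated[of m] \<open>m > 0\<close> m by fastforce
  qed
  then show ?thesis
    using \<open>m > 0\<close> by blast
qed

lemma range_eq_UNIV: "range T = UNIV"
proof -
  obtain m where "m > 0" "\<And>x. m * norm x \<le> norm (T x)"
    using bounded_below by blast
  then have "closed (range T)"
    using T by (intro closed_range_if_bounded_below) (auto simp: bounded_clinear_def)
  moreover have "closure Wgen \<subseteq> closure (range T)"
    using Wgen_subset_range by (intro closure_mono) blast
  ultimately show ?thesis
    by (auto simp: closure_Wgen)
qed

end

theorem lemma3p11:
  fixes n :: nat
    and z :: "nat \<Rightarrow> nat \<Rightarrow> complex"
    and V :: "nat \<Rightarrow> 'h::{cinner_space, complete_space} \<Rightarrow> 'h"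
    and T :: "'h \<Rightarrow> 'h"
  assumes n: "n \<ge> 1"
    and z_unimod: "\<forall>i\<in>{1..n}. \<forall>j\<in>{1..n}. i \<noteq> j \<longrightarrow> norm (z i j) = 1"
    and z_sym: "\<forall>i\<in>{1..n}. \<forall>j\<in>{1..n}. i \<noteq> j \<longrightarrow> z j i = cnj (z i j)"
    and dnc: "doubly_noncommuting n z V"
    and pure: "\<forall>i\<in>{1..n}. pure_isometry (V i)"
    and fin: "cfinite_dim (\<Inter>i\<in>{1..n}. {x. cadjoint (V i) x = 0})"
    and T: "bounded_clinear T"
    and comm: "\<forall>i\<in>{1..n}. \<exists>\<tau>. norm \<tau> = 1 \<and> (\<forall>x. T (V i x) = scaleC \<tau> (V i (T x)))"
    and inv: "\<forall>i\<in>{1..n}. T ` {x. cadjoint (V i) x = 0} \<subseteq> {x. cadjoint (V i) x = 0}"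
    and inj: "\<forall>x\<in>(\<Inter>i\<in>{1..n}. {x. cadjoint (V i) x = 0}). T x = 0 \<longrightarrow> x = 0"
  shows "range T = UNIV"
proof -
  interpret dnc_intertwiner n z V T
    using z_unimod z_sym dnc pure fin T comm inv inj by unfold_locales
  show ?thesis
    by (rule range_eq_UNIV)
qed

end
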